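(* Let $\rho$ be a representation of $D^{2,2,2}$, let $\{i,j,k\}=\{1,2,3\}$, and let $n\ge1$. Then: 1. $\psi_i(a^{ij}_n)=\nu^0(y_iA^{kj}_n)$; 2. $\psi_j(a^{ij}_n)=\nu^0(y_jA^{kj}_n)$ for $n>1$, and $\psi_j(a^{ij}_1)=\nu^0(y_j(y_i+y_k)A^{kj}_1)$; 3. $\psi_k(y_ia^{ij}_n)=\nu^0(y_kA^{ji}_{n+1})$; 4. $\psi_i(A^{ij}_n)=\nu^0(y_i(y_j+y_k)a^{ik}_n)$; 5. $\psi_j(y_kA^{ij}_n)=\nu^0(y_j(x_k+y_i)a^{ik}_n)$; 6. $\psi_k(y_jA^{ij}_n)=\nu^0(y_ka^{ji}_{n+1})$.
   Context: $D^{2,2,2}$ is the modular lattice generated by $x_1,y_1,x_2,y_2,x_3,y_3$ subject only to $x_i\subseteq y_i$ ($i=1,2,3$), with a greatest element $I$ adjoined. Meet is written $ab$, join $a+b$. Atomic elements: for distinct $i,j$, let $k$ denote the third index. Define - $a^{ij}_0=I$ and $a^{ij}_n=x_i+y_ja^{jk}_{n-1}$ for $n\ge1$; - $A^{ij}_0=I$ and $A^{ij}_n=y_i+x_jA^{ki}_{n-1}$ for $n\ge1$. A representation $\rho$ of $D^{2,2,2}$ in a finite-dimensional vector space $X_0$ is a lattice morphism from $D^{2,2,2}$ to the subspace lattice of $X_0$, with $\rho(I)=X_0$. Write $X_i=\rho(x_i)\subseteq Y_i=\rho(y_i)$. Put $R=Y_1\oplus Y_2\oplus Y_3$ and $X^1_0=\{(\eta_1,\eta_2,\eta_3)\in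 R:\sum\eta_i=0\}$. Define subspaces of $R$: - $G_i$: triples with $i$-th coordinate in $Y_i$ and the others $0$; - $H_i$: triples with $i$-th coordinate in $X_i$ and the others $0$; - $G'_i$: triples with $i$-th coordinate in $X_i$; - $H'_i$: triples with $i$-th coordinate $0$. $\Phi^+\rho$ is the representation in $X^1_0$ with $\Phi^+\rho(y_i)=G'_i\cap X^1_0$, $\Phi^+\rho(x_i)=H'_i\cap X^1_0$, $\Phi^+\rho(I)=X^1_0$. Set $\nu^1(a)=\Phi^+\rho(a)\subseteq R$. $\nu^0$ is the representation in $R$ with $\nu^0(y_i)=X^1_0+G_i$, $\nu^0(x_i)=X^1_0+H_i$, $\nu^0(I)=R$. The joint map is $\psi_i(a)=X^1_0+G_i\cap(H'_i+\nu^1(a))$. *)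

theory Defs
  imports Complex_Main "HOL-Library.Product_Plus"
begin

(* Lattice terms over the generators x_1,y_1,x_2,y_2,x_3,y_3 and the adjoined top I.
   Indices are the natural numbers 1,2,3. *)
datatype lt = LX nat | LY nat | LTop | LMeet lt lt | LJoin lt lt

(* the third index k of distinct i,j in {1,2,3} *)
definition third :: "nat \<Rightarrow> nat \<Rightarrow> nat" where
  "third i j = 6 - i - j"

fun aa :: "nat \<Rightarrow> nat \<Rightarrow> nat \<Rightarrow> lt" where
  "aa i j 0 = LTop"
| "aa i j (Suc n) = LJoin (LX i) (LMeet (LY j) (aa j (third i j) n))"

fun AA :: "nat \<Rightarrow> nat \<Rightarrow> nat \<Rightarrow> lt" where
  "AA i j 0 = LTop"
| "AA i j (Suc n) = LJoin (LY i) (LMeet (LX j) (AA (third i j) i n))"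

definition ssum :: "'v::ab_group_add set \<Rightarrow> 'v set \<Rightarrow> 'v set" where
  "ssum A B = {a + b | a b. a \<in> A \<and> b \<in> B}"

fun lt_eval :: "(nat \<Rightarrow> 'v::ab_group_add set) \<Rightarrow> (nat \<Rightarrow> 'v set) \<Rightarrow> 'v set \<Rightarrow> lt \<Rightarrow> 'v set" where
  "lt_eval Xs Ys T (LX i) = Xs i"
| "lt_eval Xs Ys T (LY i) = Ys i"
| "lt_eval Xs Ys T LTop = T"
| "lt_eval Xs Ys T (LMeet a b) = lt_eval Xs Ys T a \<inter> lt_eval Xs Ys T b"
| "lt_eval Xs Ys T (LJoin a b) = ssum (lt_eval Xs Ys T a) (lt_eval Xs Ys T b)"

definition is_rep :: "('k::field \<Rightarrow> 'v::ab_group_add \<Rightarrow> 'v) \<Rightarrow> 'v set \<Rightarrow> (nat \<Rightarrow> 'v set) \<Rightarrow> (nat \<Rightarrow> 'v set) \<Rightarrow> bool" where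
  "is_rep scale X0 Xs Ys \<longleftrightarrow> vector_space scale \<and> module.subspace scale X0
     \<and> (\<exists>B. finite B \<and> B \<subseteq> X0 \<and> module.span scale B = X0)
     \<and> (\<forall>i\<in>{1,2,3}. module.subspace scale (Xs i) \<and> module.subspace scale (Ys i)
          \<and> Xs i \<subseteq> Ys i \<and> Ys i \<subseteq> X0)"

definition coord :: "nat \<Rightarrow> 'v \<times> 'v \<times> 'v \<Rightarrow> 'v" where
  "coord i t = (if i = 1 then fst t else if i = 2 then fst (snd t) else snd (snd t))"

definition RR :: "(nat \<Rightarrow> 'v set) \<Rightarrow> ('v \<times> 'v \<times> 'v) set" where
  "RR Ys = {t. \<forall>i\<in>{1,2,3}. coord i t \<in> Ys i}"

definition X10 :: "(nat \<Rightarrow> 'v::ab_group_add set) \<Rightarrow> ('v \<times> 'v \<times> 'v) set" where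
  "X10 Ys = {t \<in> RR Ys. coord 1 t + coord 2 t + coord 3 t = 0}"

definition GG :: "(nat \<Rightarrow> 'v::ab_group_add set) \<Rightarrow> nat \<Rightarrow> ('v \<times> 'v \<times> 'v) set" where
  "GG Ys i = {t \<in> RR Ys. coord i t \<in> Ys i \<and> (\<forall>l\<in>{1,2,3}. l \<noteq> i \<longrightarrow> coord l t = 0)}"

definition HH :: "(nat \<Rightarrow> 'v::ab_group_add set) \<Rightarrow> (nat \<Rightarrow> 'v set) \<Rightarrow> nat \<Rightarrow> ('v \<times> 'v \<times> 'v) set" where
  "HH Xs Ys i = {t \<in> RR Ys. coord i t \<in> Xs i \<and> (\<forall>l\<in>{1,2,3}. l \<noteq> i \<longrightarrow> coord l t = 0)}"

definition GG' :: "(nat \<Rightarrow> 'v set) \<Rightarrow> (nat \<Rightarrow> 'v set) \<Rightarrow> nat \<Rightarrow> ('v \<times> 'v \<times> 'v) set" where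
  "GG' Xs Ys i = {t \<in> RR Ys. coord i t \<in> Xs i}"

definition HH' :: "(nat \<Rightarrow> 'v::zero set) \<Rightarrow> nat \<Rightarrow> ('v \<times> 'v \<times> 'v) set" where
  "HH' Ys i = {t \<in> RR Ys. coord i t = 0}"

(* nu^1(a) = Phi^+ rho (a), as a subspace of R *)
definition nu1 :: "(nat \<Rightarrow> 'v::ab_group_add set) \<Rightarrow> (nat \<Rightarrow> 'v set) \<Rightarrow> lt \<Rightarrow> ('v \<times> 'v \<times> 'v) set" where
  "nu1 Xs Ys a = lt_eval (\<lambda>i. HH' Ys i \<inter> X10 Ys) (\<lambda>i. GG' Xs Ys i \<inter> X10 Ys) (X10 Ys) a"

definition nu0 :: "(nat \<Rightarrow> 'v::ab_group_add set) \<Rightarrow> (nat \<Rightarrow> 'v set) \<Rightarrow> lt \<Rightarrow> ('v \<times> 'v \<times> 'v) set" where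
  "nu0 Xs Ys a = lt_eval (\<lambda>i. ssum (X10 Ys) (HH Xs Ys i)) (\<lambda>i. ssum (X10 Ys) (GG Ys i)) (RR Ys) a"

definition psi :: "(nat \<Rightarrow> 'v::ab_group_add set) \<Rightarrow> (nat \<Rightarrow> 'v set) \<Rightarrow> nat \<Rightarrow> lt \<Rightarrow> ('v \<times> 'v \<times> 'v) set" where
  "psi Xs Ys i a = ssum (X10 Ys) (GG Ys i \<inter> ssum (HH' Ys i) (nu1 Xs Ys a))"

end

theory Submission
  imports Defs
begin

(* Only the additive structure matters, so everything happens in the modular lattice of additive
   subgroups. Writing sigma for the sum of the three coordinates, nu0 b is the preimage under sigma
   of the value of b in rho, and psi_i a is the preimage of the i-th coordinate projection of nu1 a.
   Let slice i U be the set of triples in X^1_0 whose i-th coordinate lies in U. An induction on n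
   gives nu1 a^{ij}_n = slice i (Y_i \<inter> A^{kj}_n) and nu1 A^{ij}_n = slice i (Y_i \<inter> a^{ik}_n).
   Since the coordinates of a triple in X^1_0 sum to zero, the l-th projection of
   slice a A \<inter> slice b B is Y_l \<inter> (A + B); the six identities then follow from the
   modular law. *)

definition add_subgroup :: "'a::ab_group_add set \<Rightarrow> bool" where
  "add_subgroup U \<longleftrightarrow> 0 \<in> U \<and> (\<forall>a\<in>U. \<forall>b\<in>U. a + b \<in> U) \<and> (\<forall>a\<in>U. - a \<in> U)"

lemma add_subgroup_0: "add_subgroup U \<Longrightarrow> 0 \<in> U"
  and add_subgroup_add: "add_subgroup U \<Longrightarrow> a \<in> U \<Longrightarrow> b \<in> U \<Longrightarrow> a + b \<in> U"
  and add_subgroup_neg: "add_subgroup U \<Longrightarrow> a \<in> U \<Longrightarrow> - a \<in> U"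
  by (simp_all add: add_subgroup_def)

lemma add_subgroup_diff: "add_subgroup U \<Longrightarrow> a \<in> U \<Longrightarrow> b \<in> U \<Longrightarrow> a - b \<in> U"
  using add_subgroup_add[of U a "- b"] add_subgroup_neg[of U b] by simp

lemma add_subgroup_Int: "add_subgroup A \<Longrightarrow> add_subgroup B \<Longrightarrow> add_subgroup (A \<inter> B)"
  by (simp add: add_subgroup_def)

lemma (in module) add_subgroup_if_subspace: "subspace U \<Longrightarrow> add_subgroup U"
  by (simp add: add_subgroup_def subspace_0 subspace_add subspace_neg)

lemma ssumI: "a \<in> A \<Longrightarrow> b \<in> B \<Longrightarrow> a + b \<in> ssum A B"
  unfolding ssum_def by blast

lemma ssumE:
  assumes "x \<in> ssum A B"
  obtains a b where "a \<in> A" "b \<in> B" "x = a + b"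
  using assms unfolding ssum_def by blast

lemma ssum_commute: "ssum A B = ssum B A"
  unfolding ssum_def by (auto; metis add.commute)

lemma ssum_mono: "A \<subseteq> A' \<Longrightarrow> B \<subseteq> B' \<Longrightarrow> ssum A B \<subseteq> ssum A' B'"
  unfolding ssum_def by blast

lemma ssum_upper1: "0 \<in> B \<Longrightarrow> A \<subseteq> ssum A B"
  using ssumI[of _ A 0 B] by auto

lemma ssum_upper2: "0 \<in> A \<Longrightarrow> B \<subseteq> ssum A B"
  using ssumI[of 0 A _ B] by auto

lemma ssum_least: "add_subgroup C \<Longrightarrow> A \<subseteq> C \<Longrightarrow> B \<subseteq> C \<Longrightarrow> ssum A B \<subseteq> C"
  by (auto elim!: ssumE intro: add_subgroup_add)

lemma add_subgroup_ssum:
  assumes A: "add_subgroup A" and B: "add_subgroup B"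
  shows "add_subgroup (ssum A B)"
  unfolding add_subgroup_def
proof (intro conjI ballI)
  show "0 \<in> ssum A B"
    using ssumI[OF add_subgroup_0[OF A] add_subgroup_0[OF B]] by simp
next
  fix x y assume "x \<in> ssum A B" "y \<in> ssum A B"
  then obtain a b c d where "a \<in> A" "b \<in> B" "c \<in> A" "d \<in> B" "x + y = (a + c) + (b + d)"
    by (auto elim!: ssumE simp: algebra_simps)
  then show "x + y \<in> ssum A B"
    by (metis ssumI add_subgroup_add A B)
next
  fix x assume "x \<in> ssum A B"
  then obtain a b where "a \<in> A" "b \<in> B" "- x = - a + - b"
    by (auto elim!: ssumE)
  then show "- x \<in> ssum A B"
    by (metis ssumI add_subgroup_neg A B)
qed

lemma ssum_Int_modular:
  assumes "add_subgroup Z" "B \<subseteq> Z"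
  shows "ssum (A \<inter> Z) B = ssum A B \<inter> Z"
proof (intro equalityI subsetI)
  fix x assume "x \<in> ssum (A \<inter> Z) B"
  then obtain a b where "a \<in> A \<inter> Z" "b \<in> B" "x = a + b" by (rule ssumE)
  then show "x \<in> ssum A B \<inter> Z"
    using ssumI add_subgroup_add[OF assms(1)] assms(2) by blast
next
  fix x assume x: "x \<in> ssum A B \<inter> Z"
  then obtain a b where a: "a \<in> A" and b: "b \<in> B" and "x = a + b"
    by (blast elim: ssumE)
  moreover have "x - b \<in> Z" using add_subgroup_diff[OF assms(1)] x b assms(2) by blast
  ultimately have "a \<in> A \<inter> Z" by simp
  then show "x \<in> ssum (A \<inter> Z) B" using ssumI[OF _ b] \<open>x = a + b\<close> by simp
qed

lemma add_eq_0_iff_eq_neg_add: "x + y + z = (0::'a::ab_group_add) \<longleftrightarrow> x = - y + - z"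
  by (metis add.assoc add_eq_0_iff minus_add_distrib add.commute)

definition perm3 :: "nat \<Rightarrow> nat \<Rightarrow> nat \<Rightarrow> bool" where
  "perm3 a b l \<longleftrightarrow> {a, b, l} = {1, 2, 3}"

lemma perm3_cases:
  "perm3 a b l \<longleftrightarrow> (a = 1 \<and> b = 2 \<and> l = 3) \<or> (a = 1 \<and> b = 3 \<and> l = 2) \<or> (a = 2 \<and> b = 1 \<and> l = 3)
     \<or> (a = 2 \<and> b = 3 \<and> l = 1) \<or> (a = 3 \<and> b = 1 \<and> l = 2) \<or> (a = 3 \<and> b = 2 \<and> l = 1)"
  unfolding perm3_def
proof
  assume eq: "{a, b, l} = {1, 2, 3}"
  then have "a \<in> {1, 2, 3}" "b \<in> {1, 2, 3}" "l \<in> {1, 2, 3}" by blast+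
  moreover have "card {a, b, l} = 3" using eq by simp
  then have "a \<noteq> b" "a \<noteq> l" "b \<noteq> l" by (auto simp: card_insert_if split: if_splits)
  ultimately show "(a = 1 \<and> b = 2 \<and> l = 3) \<or> (a = 1 \<and> b = 3 \<and> l = 2) \<or> (a = 2 \<and> b = 1 \<and> l = 3)
     \<or> (a = 2 \<and> b = 3 \<and> l = 1) \<or> (a = 3 \<and> b = 1 \<and> l = 2) \<or> (a = 3 \<and> b = 2 \<and> l = 1)"
    by auto
qed auto

lemma perm3_swap12: "perm3 a b l \<Longrightarrow> perm3 b a l"
  and perm3_swap23: "perm3 a b l \<Longrightarrow> perm3 a l b"
  and perm3_rotate: "perm3 a b l \<Longrightarrow> perm3 b l a"
  unfolding perm3_def by (simp_all add: insert_commute)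

lemma perm3_third: "perm3 a b l \<Longrightarrow> third a b = l"
  unfolding perm3_cases third_def by (elim disjE conjE; simp)

lemma perm3_range:
  assumes "perm3 a b l"
  shows "a \<in> {1, 2, 3}" "b \<in> {1, 2, 3}" "l \<in> {1, 2, 3}"
  using assms unfolding perm3_def by blast+

lemma perm3_exists: "a \<in> {1, 2, 3} \<Longrightarrow> \<exists>b l. perm3 a b l"
  unfolding perm3_cases by auto

lemma coord_add [simp]: "coord i (s + t) = coord i s + coord i t"
  and coord_diff [simp]: "coord i (s - t) = coord i s - coord i t"
  and coord_minus [simp]: "coord i (- t) = - coord i t"
  and coord_zero [simp]: "coord i 0 = 0"
  by (simp_all add: coord_def)

definition coord_sum :: "'v::ab_group_add \<times> 'v \<times> 'v \<Rightarrow> 'v" where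
  "coord_sum t = coord 1 t + coord 2 t + coord 3 t"

lemma coord_sum_add [simp]: "coord_sum (s + t) = coord_sum s + coord_sum t"
  and coord_sum_diff [simp]: "coord_sum (s - t) = coord_sum s - coord_sum t"
  and coord_sum_minus [simp]: "coord_sum (- t) = - coord_sum t"
  and coord_sum_zero [simp]: "coord_sum 0 = 0"
  by (simp_all add: coord_sum_def algebra_simps)

lemma coord_sum_perm3: "perm3 a b l \<Longrightarrow> coord_sum t = coord a t + coord b t + coord l t"
  unfolding perm3_cases coord_sum_def by (elim disjE conjE; simp add: algebra_simps)

lemma RR_perm3:
  "perm3 a b l \<Longrightarrow> t \<in> RR Ys \<longleftrightarrow> coord a t \<in> Ys a \<and> coord b t \<in> Ys b \<and> coord l t \<in> Ys l"
  unfolding perm3_cases RR_def by (elim disjE conjE; simp; blast)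

lemma X10_eq: "X10 Ys = RR Ys \<inter> coord_sum -` {0}"
  by (auto simp: X10_def coord_sum_def)

lemma X10_perm3:
  "perm3 a b l \<Longrightarrow> t \<in> X10 Ys \<longleftrightarrow>
     coord a t \<in> Ys a \<and> coord b t \<in> Ys b \<and> coord l t \<in> Ys l \<and> coord a t + coord b t + coord l t = 0"
  by (simp add: X10_eq RR_perm3 coord_sum_perm3)

lemma X10_coord: "i \<in> {1, 2, 3} \<Longrightarrow> t \<in> X10 Ys \<Longrightarrow> coord i t \<in> Ys i"
  unfolding X10_def RR_def by blast

lemma X10_coord_eq:
  "perm3 a b l \<Longrightarrow> t \<in> X10 Ys \<Longrightarrow> coord a t = - coord b t + - coord l t"
  by (simp add: X10_perm3 add_eq_0_iff_eq_neg_add)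

definition triple_at :: "nat \<Rightarrow> nat \<Rightarrow> nat \<Rightarrow> 'v \<Rightarrow> 'v \<Rightarrow> 'v \<Rightarrow> 'v \<times> 'v \<times> 'v" where
  "triple_at a b l x y z = (let f = (\<lambda>m. if m = a then x else if m = b then y else z) in (f 1, f 2, f 3))"

lemma coord_triple_at:
  assumes "perm3 a b l"
  shows "coord a (triple_at a b l x y z) = x" "coord b (triple_at a b l x y z) = y"
    "coord l (triple_at a b l x y z) = z"
  using assms unfolding perm3_cases triple_at_def coord_def Let_def by (elim disjE conjE; simp)+

lemma triple_at_in_X10:
  "perm3 a b l \<Longrightarrow> x \<in> Ys a \<Longrightarrow> y \<in> Ys b \<Longrightarrow> z \<in> Ys l \<Longrightarrow> x + y + z = 0 \<Longrightarrow>
     triple_at a b l x y z \<in> X10 Ys"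
  by (simp add: X10_perm3 coord_triple_at)

locale subgroup_rep =
  fixes Xs Ys :: "nat \<Rightarrow> 'v::ab_group_add set"
  assumes add_subgroup_X: "i \<in> {1, 2, 3} \<Longrightarrow> add_subgroup (Xs i)"
    and add_subgroup_Y: "i \<in> {1, 2, 3} \<Longrightarrow> add_subgroup (Ys i)"
    and X_subset_Y: "i \<in> {1, 2, 3} \<Longrightarrow> Xs i \<subseteq> Ys i"

lemma subgroup_rep_if_is_rep:
  assumes "is_rep scale X0 Xs Ys"
  shows "subgroup_rep Xs Ys"
proof -
  have "module scale"
    using assms module_iff_vector_space unfolding is_rep_def by blast
  then show ?thesis
    using assms module.add_subgroup_if_subspace unfolding is_rep_def subgroup_rep_def by blast
qed

context subgroup_rep
begin

lemma add_subgroup_RR: "add_subgroup (RR Ys)"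
  using add_subgroup_Y by (auto simp: add_subgroup_def RR_def)

lemma add_subgroup_X10: "add_subgroup (X10 Ys)"
  using add_subgroup_RR by (auto simp: add_subgroup_def X10_eq)

definition Ysum :: "'v set" where
  "Ysum = coord_sum ` RR Ys"

(* The top is sent to Y_1 + Y_2 + Y_3 rather than X_0; nu0 only sees preimages under coord_sum,
   which cannot tell the two apart. *)
definition rho :: "lt \<Rightarrow> 'v set" where
  "rho = lt_eval Xs Ys Ysum"

lemma rho_simps [simp]:
  "rho (LX i) = Xs i" "rho (LY i) = Ys i" "rho LTop = Ysum"
  "rho (LMeet a b) = rho a \<inter> rho b" "rho (LJoin a b) = ssum (rho a) (rho b)"
  by (simp_all add: rho_def)

lemma add_subgroup_Ysum: "add_subgroup Ysum"
  unfolding add_subgroup_def Ysum_def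
proof (intro conjI ballI)
  show "0 \<in> coord_sum ` RR Ys"
    by (rule image_eqI[of _ _ 0]) (simp_all add: add_subgroup_0[OF add_subgroup_RR])
next
  fix a b assume "a \<in> coord_sum ` RR Ys" "b \<in> coord_sum ` RR Ys"
  then obtain s t where "s \<in> RR Ys" "t \<in> RR Ys" "a = coord_sum s" "b = coord_sum t" by blast
  then show "a + b \<in> coord_sum ` RR Ys"
    by (intro image_eqI[of _ _ "s + t"]) (simp_all add: add_subgroup_add[OF add_subgroup_RR])
next
  fix a assume "a \<in> coord_sum ` RR Ys"
  then obtain t where "t \<in> RR Ys" "a = coord_sum t" by blast
  then show "- a \<in> coord_sum ` RR Ys"
    by (intro image_eqI[of _ _ "- t"]) (simp_all add: add_subgroup_neg[OF add_subgroup_RR])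
qed

lemma zero_in_Y: "i \<in> {1, 2, 3} \<Longrightarrow> 0 \<in> Ys i"
  by (rule add_subgroup_0[OF add_subgroup_Y])

lemma Y_subset_Ysum:
  assumes i: "i \<in> {1, 2, 3}"
  shows "Ys i \<subseteq> Ysum"
proof
  fix y assume y: "y \<in> Ys i"
  obtain b l where p: "perm3 i b l" using perm3_exists i by blast
  let ?t = "triple_at i b l y 0 0"
  have "0 \<in> Ys b" "0 \<in> Ys l"
    using zero_in_Y perm3_range[OF p] by simp_all
  with y have "?t \<in> RR Ys"
    by (simp add: RR_perm3[OF p] coord_triple_at[OF p])
  moreover have "y = coord_sum ?t" by (simp add: coord_sum_perm3[OF p] coord_triple_at[OF p])
  ultimately show "y \<in> Ysum" unfolding Ysum_def by (rule rev_image_eqI)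
qed

fun valid_term :: "lt \<Rightarrow> bool" where
  "valid_term (LX i) = (i \<in> {1, 2, 3})"
| "valid_term (LY i) = (i \<in> {1, 2, 3})"
| "valid_term LTop = True"
| "valid_term (LMeet a b) = (valid_term a \<and> valid_term b)"
| "valid_term (LJoin a b) = (valid_term a \<and> valid_term b)"

lemma rho_subset_Ysum_add_subgroup: "valid_term b \<Longrightarrow> rho b \<subseteq> Ysum \<and> add_subgroup (rho b)"
proof (induction b)
  case (LJoin b1 b2)
  then show ?case
    using add_subgroup_Ysum by (auto intro: add_subgroup_ssum ssum_least[THEN subsetD])
qed (use X_subset_Y Y_subset_Ysum add_subgroup_X add_subgroup_Y add_subgroup_Ysum
  in \<open>auto intro: add_subgroup_Int\<close>)

lemma rho_subset_Ysum: "valid_term b \<Longrightarrow> rho b \<subseteq> Ysum"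
  and add_subgroup_rho: "valid_term b \<Longrightarrow> add_subgroup (rho b)"
  using rho_subset_Ysum_add_subgroup by simp_all

lemma add_subgroup_X_Int_rho: "i \<in> {1, 2, 3} \<Longrightarrow> valid_term b \<Longrightarrow> add_subgroup (Xs i \<inter> rho b)"
  and add_subgroup_Y_Int_rho: "i \<in> {1, 2, 3} \<Longrightarrow> valid_term b \<Longrightarrow> add_subgroup (Ys i \<inter> rho b)"
  by (simp_all add: add_subgroup_Int add_subgroup_X add_subgroup_Y add_subgroup_rho)

definition axis :: "nat \<Rightarrow> 'v set \<Rightarrow> ('v \<times> 'v \<times> 'v) set" where
  "axis i P = {t \<in> RR Ys. coord i t \<in> P \<and> (\<forall>l\<in>{1, 2, 3}. l \<noteq> i \<longrightarrow> coord l t = 0)}"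

lemma axis_perm3:
  "perm3 i b l \<Longrightarrow> t \<in> axis i P \<longleftrightarrow> t \<in> RR Ys \<and> coord i t \<in> P \<and> coord b t = 0 \<and> coord l t = 0"
  unfolding axis_def perm3_cases by (elim disjE conjE) auto

lemma X10_ssum_axis:
  assumes i: "i \<in> {1, 2, 3}" and P: "P \<subseteq> Ys i"
  shows "ssum (X10 Ys) (axis i P) = RR Ys \<inter> coord_sum -` P"
proof -
  obtain b l where p: "perm3 i b l" using perm3_exists i by blast
  have coord_sum_axis: "coord_sum g = coord i g" if "g \<in> axis i P" for g
    using that by (simp add: axis_perm3[OF p] coord_sum_perm3[OF p])
  show ?thesis
  proof (intro equalityI subsetI)
    fix x assume "x \<in> ssum (X10 Ys) (axis i P)"
    then obtain z g where z: "z \<in> X10 Ys" and g: "g \<in> axis i P" and x: "x = z + g" by (rule ssumE)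
    have "z \<in> RR Ys" "coord_sum z = 0" using z by (simp_all add: X10_eq)
    moreover have "g \<in> RR Ys" "coord i g \<in> P" using g by (simp_all add: axis_perm3[OF p])
    ultimately show "x \<in> RR Ys \<inter> coord_sum -` P"
      using x coord_sum_axis[OF g] add_subgroup_add[OF add_subgroup_RR] by simp
  next
    fix x assume x: "x \<in> RR Ys \<inter> coord_sum -` P"
    let ?g = "triple_at i b l (coord_sum x) 0 0"
    have "0 \<in> Ys b" "0 \<in> Ys l"
      using zero_in_Y perm3_range[OF p] by simp_all
    moreover have "coord_sum x \<in> Ys i" using x P by blast
    ultimately have "?g \<in> RR Ys" by (simp add: RR_perm3[OF p] coord_triple_at[OF p])
    then have g: "?g \<in> axis i P" using x by (simp add: axis_perm3[OF p] coord_triple_at[OF p])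
    then have "coord_sum ?g = coord_sum x" by (simp add: coord_sum_axis coord_triple_at[OF p])
    then have "x - ?g \<in> X10 Ys"
      using x \<open>?g \<in> RR Ys\<close> add_subgroup_diff[OF add_subgroup_RR] by (simp add: X10_eq)
    then show "x \<in> ssum (X10 Ys) (axis i P)"
      using ssumI[of "x - ?g" "X10 Ys" ?g "axis i P"] g by simp
  qed
qed

lemma ssum_vimage_coord_sum:
  assumes "A \<subseteq> Ysum" "B \<subseteq> Ysum"
  shows "ssum (RR Ys \<inter> coord_sum -` A) (RR Ys \<inter> coord_sum -` B) = RR Ys \<inter> coord_sum -` ssum A B"
proof (intro equalityI subsetI)
  fix x assume "x \<in> ssum (RR Ys \<inter> coord_sum -` A) (RR Ys \<inter> coord_sum -` B)"
  then obtain r s where "r \<in> RR Ys" "coord_sum r \<in> A" "s \<in> RR Ys" "coord_sum s \<in> B" "x = r + s"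
    by (elim ssumE) blast
  then show "x \<in> RR Ys \<inter> coord_sum -` ssum A B"
    using ssumI add_subgroup_add[OF add_subgroup_RR] by simp
next
  fix x assume x: "x \<in> RR Ys \<inter> coord_sum -` ssum A B"
  then obtain a b where ab: "a \<in> A" "b \<in> B" "coord_sum x = a + b" by (auto elim: ssumE)
  then obtain r where r: "r \<in> RR Ys" "coord_sum r = a"
    using assms unfolding Ysum_def by blast
  have "x - r \<in> RR Ys \<inter> coord_sum -` B"
    using x r ab add_subgroup_diff[OF add_subgroup_RR] by auto
  then show "x \<in> ssum (RR Ys \<inter> coord_sum -` A) (RR Ys \<inter> coord_sum -` B)"
    using ssumI[of r "RR Ys \<inter> coord_sum -` A" "x - r" "RR Ys \<inter> coord_sum -` B"] r ab by simp
qed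

lemma nu0_eq_vimage: "valid_term b \<Longrightarrow> nu0 Xs Ys b = RR Ys \<inter> coord_sum -` rho b"
proof (induction b)
  case (LX i)
  have "HH Xs Ys i = axis i (Xs i)" by (auto simp: HH_def axis_def)
  then show ?case
    using LX X10_ssum_axis X_subset_Y by (simp add: nu0_def)
next
  case (LY i)
  have "GG Ys i = axis i (Ys i)" by (auto simp: GG_def axis_def)
  then show ?case
    using LY X10_ssum_axis by (simp add: nu0_def)
next
  case (LJoin b1 b2)
  then show ?case
    using ssum_vimage_coord_sum rho_subset_Ysum by (simp add: nu0_def)
qed (auto simp: nu0_def Ysum_def)

definition slice :: "nat \<Rightarrow> 'v set \<Rightarrow> ('v \<times> 'v \<times> 'v) set" where
  "slice a U = {t \<in> X10 Ys. coord a t \<in> U}"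

lemma nu1_simps [simp]:
  "nu1 Xs Ys (LX i) = slice i {0}" "nu1 Xs Ys (LY i) = slice i (Xs i)" "nu1 Xs Ys LTop = X10 Ys"
  "nu1 Xs Ys (LMeet a b) = nu1 Xs Ys a \<inter> nu1 Xs Ys b"
  "nu1 Xs Ys (LJoin a b) = ssum (nu1 Xs Ys a) (nu1 Xs Ys b)"
  by (auto simp: nu1_def slice_def HH'_def GG'_def X10_def)

lemma nu1_subset_X10: "nu1 Xs Ys a \<subseteq> X10 Ys"
  by (induction a) (auto simp: slice_def intro: ssum_least[OF add_subgroup_X10, THEN subsetD])

lemma psi_eq_vimage:
  assumes i: "i \<in> {1, 2, 3}"
  shows "psi Xs Ys i a = RR Ys \<inter> coord_sum -` (coord i ` nu1 Xs Ys a)"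
proof -
  let ?M = "nu1 Xs Ys a"
  have M: "?M \<subseteq> RR Ys" using nu1_subset_X10 by (auto simp: X10_eq)
  have "GG Ys i \<inter> ssum (HH' Ys i) ?M = axis i (coord i ` ?M)"
  proof (intro equalityI subsetI)
    fix g assume g: "g \<in> GG Ys i \<inter> ssum (HH' Ys i) ?M"
    then obtain h m where "h \<in> HH' Ys i" "m \<in> ?M" "g = h + m" by (auto elim: ssumE)
    with g show "g \<in> axis i (coord i ` ?M)" by (auto simp: GG_def HH'_def axis_def)
  next
    fix g assume g: "g \<in> axis i (coord i ` ?M)"
    then obtain m where m: "m \<in> ?M" "coord i g = coord i m" by (auto simp: axis_def)
    have "g - m \<in> RR Ys"
      using add_subgroup_diff[OF add_subgroup_RR] g m(1) M unfolding axis_def by blast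
    then have "g - m \<in> HH' Ys i" using m(2) by (simp add: HH'_def)
    then have "g \<in> ssum (HH' Ys i) ?M" using ssumI[of "g - m" "HH' Ys i" m ?M] m(1) by simp
    moreover have "g \<in> GG Ys i" using g m(1) M i by (auto simp: GG_def axis_def RR_def)
    ultimately show "g \<in> GG Ys i \<inter> ssum (HH' Ys i) ?M" by blast
  qed
  moreover have "coord i ` ?M \<subseteq> Ys i" using M i by (auto simp: RR_def)
  ultimately show ?thesis
    unfolding psi_def using X10_ssum_axis[OF i] by simp
qed

lemma psi_eq_nu0I:
  "i \<in> {1, 2, 3} \<Longrightarrow> valid_term b \<Longrightarrow> coord i ` nu1 Xs Ys a = rho b \<Longrightarrow> psi Xs Ys i a = nu0 Xs Ys b"
  by (simp add: psi_eq_vimage nu0_eq_vimage)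

lemma X10_neg_coord: "i \<in> {1, 2, 3} \<Longrightarrow> t \<in> X10 Ys \<Longrightarrow> - coord i t \<in> Ys i"
  using X10_coord add_subgroup_neg add_subgroup_Y by blast

lemma slice_subset_X10: "slice a U \<subseteq> X10 Ys"
  by (simp add: slice_def)

lemma slice_Int: "slice a A \<inter> slice a B = slice a (A \<inter> B)"
  by (auto simp: slice_def)

lemma slice_Ys: "a \<in> {1, 2, 3} \<Longrightarrow> slice a (Ys a) = X10 Ys"
  unfolding slice_def using X10_coord[of a _ Ys] by blast

lemma ssum_slice_zero:
  assumes p: "perm3 a b l" and W: "add_subgroup W" "W \<subseteq> Ys b"
  shows "ssum (slice a {0}) (slice b W) = slice a (Ys a \<inter> ssum W (Ys l))"
proof (intro equalityI subsetI)
  fix x assume "x \<in> ssum (slice a {0}) (slice b W)"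
  then obtain u v where u: "u \<in> slice a {0}" and v: "v \<in> slice b W" and x: "x = u + v"
    by (rule ssumE)
  have vX: "v \<in> X10 Ys" and vb: "coord b v \<in> W" using v by (simp_all add: slice_def)
  have "x \<in> X10 Ys"
    using u v x add_subgroup_add[OF add_subgroup_X10] by (simp add: slice_def)
  moreover have "coord a x \<in> ssum W (Ys l)"
  proof -
    have "coord a x = - coord b v + - coord l v"
      using u x X10_coord_eq[OF p vX] by (simp add: slice_def)
    also have "\<dots> \<in> ssum W (Ys l)"
      using ssumI add_subgroup_neg[OF W(1) vb] X10_neg_coord[OF perm3_range(3)[OF p] vX] .
    finally show ?thesis .
  qed
  ultimately show "x \<in> slice a (Ys a \<inter> ssum W (Ys l))"
    using X10_coord[OF perm3_range(1)[OF p]] by (simp add: slice_def)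
next
  fix x assume x: "x \<in> slice a (Ys a \<inter> ssum W (Ys l))"
  then obtain w y where w: "w \<in> W" and y: "y \<in> Ys l" and xa: "coord a x = w + y"
    by (auto simp: slice_def elim: ssumE)
  let ?v = "triple_at a b l (coord a x) (- w) (- y)"
  have "- w \<in> W" "- y \<in> Ys l"
    using add_subgroup_neg[OF W(1) w] add_subgroup_neg[OF add_subgroup_Y[OF perm3_range(3)[OF p]] y]
    by simp_all
  moreover have "?v \<in> X10 Ys"
  proof (rule triple_at_in_X10[OF p])
    show "coord a x \<in> Ys a" using x by (simp add: slice_def)
    show "- w \<in> Ys b" using \<open>- w \<in> W\<close> W(2) by blast
    show "- y \<in> Ys l" by fact
    show "coord a x + - w + - y = 0" using xa by simp
  qed
  ultimately have v: "?v \<in> slice b W" by (simp add: slice_def coord_triple_at[OF p])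
  then have "x - ?v \<in> slice a {0}"
    using x add_subgroup_diff[OF add_subgroup_X10] by (simp add: slice_def coord_triple_at[OF p])
  then show "x \<in> ssum (slice a {0}) (slice b W)"
    using ssumI[of "x - ?v" "slice a {0}" ?v "slice b W"] v by simp
qed

lemma ssum_slice_slice_zero:
  assumes p: "perm3 a b l" and U: "add_subgroup U" "U \<subseteq> Ys l"
  shows "ssum (slice a V) (slice b {0} \<inter> slice l U) = slice a (ssum V (Ys a \<inter> U))"
proof (intro equalityI subsetI)
  fix x assume "x \<in> ssum (slice a V) (slice b {0} \<inter> slice l U)"
  then obtain v u where v: "v \<in> slice a V" and u: "u \<in> slice b {0} \<inter> slice l U" and x: "x = v + u"
    by (rule ssumE)
  have uX: "u \<in> X10 Ys" and ub: "coord b u = 0" and ul: "coord l u \<in> U"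
    using u by (simp_all add: slice_def)
  have "coord a u = - coord l u" using X10_coord_eq[OF p uX] ub by simp
  then have "coord a u \<in> Ys a \<inter> U"
    using add_subgroup_neg[OF U(1) ul] X10_coord[OF perm3_range(1)[OF p] uX] by simp
  then have "coord a x \<in> ssum V (Ys a \<inter> U)"
    using ssumI[of "coord a v" V] v x by (simp add: slice_def)
  moreover have "x \<in> X10 Ys"
    using u v x add_subgroup_add[OF add_subgroup_X10] by (simp add: slice_def)
  ultimately show "x \<in> slice a (ssum V (Ys a \<inter> U))" by (simp add: slice_def)
next
  fix x assume x: "x \<in> slice a (ssum V (Ys a \<inter> U))"
  then obtain q w where q: "q \<in> V" and w: "w \<in> Ys a" "w \<in> U" and xa: "coord a x = q + w"
    by (auto simp: slice_def elim: ssumE)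
  let ?u = "triple_at a b l w 0 (- w)"
  have "- w \<in> U" using w U(1) add_subgroup_neg by blast
  moreover have "?u \<in> X10 Ys"
  proof (rule triple_at_in_X10[OF p])
    show "w \<in> Ys a" by (rule w(1))
    show "0 \<in> Ys b" using zero_in_Y[OF perm3_range(2)[OF p]] .
    show "- w \<in> Ys l" using \<open>- w \<in> U\<close> U(2) by blast
  qed simp
  ultimately have u: "?u \<in> slice b {0} \<inter> slice l U"
    by (simp add: slice_def coord_triple_at[OF p])
  then have "x - ?u \<in> slice a V"
    using x q xa add_subgroup_diff[OF add_subgroup_X10] by (simp add: slice_def coord_triple_at[OF p])
  then show "x \<in> ssum (slice a V) (slice b {0} \<inter> slice l U)"
    using ssumI[of "x - ?u" "slice a V" ?u "slice b {0} \<inter> slice l U"] u by simp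
qed

lemma coord_image_slices:
  assumes p: "perm3 a b l" and A: "add_subgroup A" "A \<subseteq> Ys a" and B: "add_subgroup B" "B \<subseteq> Ys b"
    and L: "L \<subseteq> Ys l"
  shows "coord l ` (slice a A \<inter> slice b B \<inter> slice l L) = L \<inter> ssum A B"
proof (intro equalityI subsetI)
  fix y assume "y \<in> coord l ` (slice a A \<inter> slice b B \<inter> slice l L)"
  then obtain t where t: "t \<in> slice a A \<inter> slice b B \<inter> slice l L" and y: "y = coord l t" by blast
  have tX: "t \<in> X10 Ys" and ta: "coord a t \<in> A" and tb: "coord b t \<in> B"
    using t by (simp_all add: slice_def)
  have "y = - coord a t + - coord b t"
    using y X10_coord_eq[OF perm3_rotate[OF perm3_rotate[OF p]] tX] by simp
  also have "\<dots> \<in> ssum A B"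
    using ssumI add_subgroup_neg[OF A(1) ta] add_subgroup_neg[OF B(1) tb] .
  finally show "y \<in> L \<inter> ssum A B"
    using t y by (simp add: slice_def)
next
  fix y assume "y \<in> L \<inter> ssum A B"
  then obtain \<alpha> \<beta> where y: "y \<in> L" and \<alpha>: "\<alpha> \<in> A" and \<beta>: "\<beta> \<in> B" and eq: "y = \<alpha> + \<beta>"
    by (auto elim: ssumE)
  let ?t = "triple_at a b l (- \<alpha>) (- \<beta>) y"
  have "- \<alpha> \<in> A" "- \<beta> \<in> B" using add_subgroup_neg[OF A(1) \<alpha>] add_subgroup_neg[OF B(1) \<beta>] by simp_all
  moreover have "?t \<in> X10 Ys"
  proof (rule triple_at_in_X10[OF p])
    show "- \<alpha> \<in> Ys a" "- \<beta> \<in> Ys b" using \<open>- \<alpha> \<in> A\<close> \<open>- \<beta> \<in> B\<close> A(2) B(2) by blast+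
    show "y \<in> Ys l" using y L by blast
    show "- \<alpha> + - \<beta> + y = 0" using eq by simp
  qed
  ultimately have "?t \<in> slice a A \<inter> slice b B \<inter> slice l L"
    using y by (simp add: slice_def coord_triple_at[OF p])
  moreover have "y = coord l ?t" by (simp add: coord_triple_at[OF p])
  ultimately show "y \<in> coord l ` (slice a A \<inter> slice b B \<inter> slice l L)"
    by (rule rev_image_eqI)
qed

lemma coord_image_slice_slice:
  assumes p: "perm3 a b l" and A: "add_subgroup A" "A \<subseteq> Ys a" and B: "add_subgroup B" "B \<subseteq> Ys b"
  shows "coord l ` (slice a A \<inter> slice b B) = Ys l \<inter> ssum A B"
proof -
  have "slice a A \<inter> slice b B = slice a A \<inter> slice b B \<inter> slice l (Ys l)"
    using slice_Ys perm3_range[OF p] slice_subset_X10 by blast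
  then show ?thesis using coord_image_slices[OF p A B order.refl] by simp
qed

lemma coord_image_slice:
  assumes p: "perm3 a b l" and A: "A \<subseteq> Ys a"
  shows "coord a ` slice a A = A \<inter> ssum (Ys b) (Ys l)"
proof -
  have "slice a A = slice b (Ys b) \<inter> slice l (Ys l) \<inter> slice a A"
    using slice_Ys perm3_range[OF p] slice_subset_X10 by blast
  moreover have "b \<in> {1, 2, 3}" "l \<in> {1, 2, 3}" using perm3_range[OF p] by auto
  ultimately show ?thesis
    using coord_image_slices[OF perm3_rotate[OF p] add_subgroup_Y order.refl add_subgroup_Y order.refl A]
    by simp
qed

lemma valid_aa: "perm3 i j k \<Longrightarrow> valid_term (aa i j n)"
proof (induction n arbitrary: i j k)
  case (Suc n)
  then show ?case
    using Suc.IH[OF perm3_rotate[OF Suc.prems]] perm3_range[OF Suc.prems] perm3_third[OF Suc.prems]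
    by simp
qed simp

lemma valid_AA: "perm3 i j k \<Longrightarrow> valid_term (AA i j n)"
proof (induction n arbitrary: i j k)
  case (Suc n)
  then show ?case
    using Suc.IH[OF perm3_rotate[OF perm3_rotate[OF Suc.prems]]] perm3_range[OF Suc.prems]
      perm3_third[OF Suc.prems]
    by simp
qed simp

lemma slice_Int_Ysum: "a \<in> {1, 2, 3} \<Longrightarrow> slice a (Ys a \<inter> Ysum) = X10 Ys"
  using slice_Ys Y_subset_Ysum by (simp add: Int_absorb2)

lemma nu1_aa: "perm3 i j k \<Longrightarrow> nu1 Xs Ys (aa i j n) = slice i (Ys i \<inter> rho (AA k j n))"
proof (induction n arbitrary: i j k)
  case 0
  then show ?case using slice_Int_Ysum[OF perm3_range(1)[OF 0]] by simp
next
  case (Suc n)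
  note p = Suc.prems
  let ?W = "Xs j \<inter> rho (AA i k n)"
  have W: "add_subgroup ?W" "?W \<subseteq> Ys j"
    using add_subgroup_X_Int_rho[OF perm3_range(2)[OF p] valid_AA[OF perm3_swap23[OF p]]]
      X_subset_Y[OF perm3_range(2)[OF p]] by auto
  have "nu1 Xs Ys (aa i j (Suc n)) = ssum (slice i {0}) (slice j (Xs j) \<inter> nu1 Xs Ys (aa j k n))"
    using perm3_third[OF p] by simp
  also have "slice j (Xs j) \<inter> nu1 Xs Ys (aa j k n) = slice j ?W"
    using Suc.IH[OF perm3_rotate[OF p]] X_subset_Y[OF perm3_range(2)[OF p]]
    by (simp add: slice_Int Int_absorb2 flip: Int_assoc)
  also have "ssum (slice i {0}) (slice j ?W) = slice i (Ys i \<inter> ssum ?W (Ys k))"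
    using ssum_slice_zero[OF p W] .
  also have "ssum ?W (Ys k) = rho (AA k j (Suc n))"
    using perm3_third[OF perm3_swap12[OF perm3_rotate[OF p]]] by (simp add: ssum_commute)
  finally show ?case .
qed

lemma nu1_AA: "perm3 i j k \<Longrightarrow> nu1 Xs Ys (AA i j n) = slice i (Ys i \<inter> rho (aa i k n))"
proof (induction n arbitrary: i j k)
  case 0
  then show ?case using slice_Int_Ysum[OF perm3_range(1)[OF 0]] by simp
next
  case (Suc n)
  note p = Suc.prems
  let ?U = "Ys k \<inter> rho (aa k j n)"
  have U: "add_subgroup ?U" "?U \<subseteq> Ys k"
    using add_subgroup_Y_Int_rho[OF perm3_range(3)[OF p] valid_aa[OF perm3_swap12[OF perm3_rotate[OF p]]]]
    by auto
  have "nu1 Xs Ys (AA i j (Suc n)) = ssum (slice i (Xs i)) (slice j {0} \<inter> slice k ?U)"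
    using perm3_third[OF p] Suc.IH[OF perm3_rotate[OF perm3_rotate[OF p]]] by simp
  also have "\<dots> = slice i (ssum (Xs i) (Ys i \<inter> ?U))"
    using ssum_slice_slice_zero[OF p U] .
  also have "ssum (Xs i) (Ys i \<inter> ?U) = Ys i \<inter> ssum (Xs i) ?U"
    using ssum_Int_modular[OF add_subgroup_Y X_subset_Y, of i ?U] perm3_range(1)[OF p]
    by (simp add: ssum_commute Int_commute)
  also have "ssum (Xs i) ?U = rho (aa i k (Suc n))"
    using perm3_third[OF perm3_swap23[OF p]] by simp
  finally show ?case .
qed

lemma Y_subset_rho_AA:
  assumes p: "perm3 i j k" and n: "n \<ge> 1"
  shows "Ys i \<subseteq> rho (AA i j n)"
proof -
  obtain m where m: "n = Suc m" using n by (cases n) auto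
  let ?V = "Xs j \<inter> rho (AA k i m)"
  have "0 \<in> ?V"
    using add_subgroup_0[OF add_subgroup_X_Int_rho[OF perm3_range(2)[OF p]
      valid_AA[OF perm3_rotate[OF perm3_rotate[OF p]]]]] .
  then show ?thesis
    using ssum_upper1[of ?V "Ys i"] m perm3_third[OF p] by simp
qed

lemma rho_AA_subset:
  assumes j: "j \<in> {1, 2, 3}" and n: "n \<ge> 1"
  shows "rho (AA i j n) \<subseteq> ssum (Ys i) (Ys j)"
proof -
  obtain m where "n = Suc m" using n by (cases n) auto
  moreover have "Xs j \<inter> rho (AA (third i j) i m) \<subseteq> Ys j" using X_subset_Y[OF j] by blast
  ultimately show ?thesis using ssum_mono[OF order.refl] by simp
qed

lemma X_subset_rho_aa:
  assumes p: "perm3 i j k"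
  shows "Xs i \<subseteq> rho (aa i j n)"
proof (cases n)
  case 0
  then show ?thesis
    using X_subset_Y[OF perm3_range(1)[OF p]] Y_subset_Ysum[OF perm3_range(1)[OF p]] by auto
next
  case (Suc m)
  let ?V = "Ys j \<inter> rho (aa j k m)"
  have "0 \<in> ?V"
    using add_subgroup_0[OF add_subgroup_Y_Int_rho[OF perm3_range(2)[OF p] valid_aa[OF perm3_rotate[OF p]]]] .
  then show ?thesis
    using ssum_upper1[of ?V "Xs i"] Suc perm3_third[OF p] by simp
qed

lemma X_subset_rho_aa_snd:
  assumes p: "perm3 i j k"
  shows "Xs j \<subseteq> rho (aa i j n)"
proof (cases n)
  case 0
  then show ?thesis
    using X_subset_Y[OF perm3_range(2)[OF p]] Y_subset_Ysum[OF perm3_range(2)[OF p]] by auto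
next
  case (Suc m)
  have "Xs j \<subseteq> Ys j \<inter> rho (aa j k m)"
    using X_subset_Y[OF perm3_range(2)[OF p]] X_subset_rho_aa[OF perm3_rotate[OF p]] by blast
  also have "\<dots> \<subseteq> ssum (Xs i) (Ys j \<inter> rho (aa j k m))"
    using ssum_upper2 add_subgroup_0[OF add_subgroup_X[OF perm3_range(1)[OF p]]] .
  finally show ?thesis using Suc perm3_third[OF p] by simp
qed

lemma psi_aa_fst:
  assumes p: "perm3 i j k" and n: "n \<ge> 1"
  shows "psi Xs Ys i (aa i j n) = nu0 Xs Ys (LMeet (LY i) (AA k j n))"
proof (rule psi_eq_nu0I)
  let ?Z = "rho (AA k j n)"
  have "?Z \<subseteq> ssum (Ys j) (Ys k)"
    using rho_AA_subset[OF perm3_range(2)[OF p] n, of k] by (simp add: ssum_commute)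
  then show "coord i ` nu1 Xs Ys (aa i j n) = rho (LMeet (LY i) (AA k j n))"
    using nu1_aa[OF p] coord_image_slice[OF p] by auto
qed (use perm3_range[OF p] valid_AA[OF perm3_swap12[OF perm3_rotate[OF p]]] in simp_all)

lemma coord_image_nu1_aa_snd:
  assumes p: "perm3 i j k" and n: "n \<ge> 1"
  shows "coord j ` nu1 Xs Ys (aa i j n) = Ys j \<inter> (ssum (Ys i) (Ys k) \<inter> rho (AA k j n))"
proof -
  let ?Z = "rho (AA k j n)"
  have valid: "valid_term (AA k j n)" using valid_AA[OF perm3_swap12[OF perm3_rotate[OF p]]] .
  have "nu1 Xs Ys (aa i j n) = slice i (Ys i \<inter> ?Z) \<inter> slice k (Ys k)"
    using nu1_aa[OF p] slice_Ys[OF perm3_range(3)[OF p]] slice_subset_X10 by blast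
  then have "coord j ` nu1 Xs Ys (aa i j n) = Ys j \<inter> ssum (Ys i \<inter> ?Z) (Ys k)"
    using coord_image_slice_slice[OF perm3_swap23[OF p] add_subgroup_Y_Int_rho[OF perm3_range(1)[OF p] valid]
      _ add_subgroup_Y[OF perm3_range(3)[OF p]] order.refl]
    by simp
  also have "ssum (Ys i \<inter> ?Z) (Ys k) = ssum (Ys i) (Ys k) \<inter> ?Z"
    using ssum_Int_modular[OF add_subgroup_rho[OF valid] Y_subset_rho_AA[OF perm3_swap12[OF perm3_rotate[OF p]] n]] .
  finally show ?thesis .
qed

lemma psi_aa_snd:
  assumes p: "perm3 i j k" and n: "n > 1"
  shows "psi Xs Ys j (aa i j n) = nu0 Xs Ys (LMeet (LY j) (AA k j n))"
proof (rule psi_eq_nu0I)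
  obtain m where m: "n = Suc m" "m \<ge> 1" using n by (cases n) auto
  let ?S = "ssum (Ys i) (Ys k)"
  have "Xs j \<inter> rho (AA i k m) \<subseteq> ?S"
    using rho_AA_subset[OF perm3_range(3)[OF p] m(2)] by blast
  moreover have "Ys k \<subseteq> ?S" using ssum_upper2[OF zero_in_Y[OF perm3_range(1)[OF p]]] .
  ultimately have "rho (AA k j n) \<subseteq> ?S"
    using ssum_least[OF add_subgroup_ssum[OF add_subgroup_Y add_subgroup_Y]] perm3_range[OF p] m(1)
      perm3_third[OF perm3_swap12[OF perm3_rotate[OF p]]]
    by simp
  then show "coord j ` nu1 Xs Ys (aa i j n) = rho (LMeet (LY j) (AA k j n))"
    using coord_image_nu1_aa_snd[OF p] n by auto
qed (use perm3_range[OF p] valid_AA[OF perm3_swap12[OF perm3_rotate[OF p]]] in simp_all)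

lemma psi_aa_snd_1:
  assumes p: "perm3 i j k"
  shows "psi Xs Ys j (aa i j 1) = nu0 Xs Ys (LMeet (LMeet (LY j) (LJoin (LY i) (LY k))) (AA k j 1))"
  using coord_image_nu1_aa_snd[OF p] perm3_range[OF p] valid_AA[OF perm3_swap12[OF perm3_rotate[OF p]]]
  by (intro psi_eq_nu0I) (simp_all add: Int_assoc del: AA.simps aa.simps)

lemma psi_Y_aa_third:
  assumes p: "perm3 i j k"
  shows "psi Xs Ys k (LMeet (LY i) (aa i j n)) = nu0 Xs Ys (LMeet (LY k) (AA j i (n + 1)))"
proof (rule psi_eq_nu0I)
  let ?V = "Xs i \<inter> rho (AA k j n)"
  have V: "add_subgroup ?V" "?V \<subseteq> Ys i"
    using add_subgroup_X_Int_rho[OF perm3_range(1)[OF p] valid_AA[OF perm3_swap12[OF perm3_rotate[OF p]]]]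
      X_subset_Y[OF perm3_range(1)[OF p]] by auto
  have "nu1 Xs Ys (LMeet (LY i) (aa i j n)) = slice i ?V \<inter> slice j (Ys j)"
    using nu1_aa[OF p] X_subset_Y[OF perm3_range(1)[OF p]] slice_Ys[OF perm3_range(2)[OF p]]
      slice_subset_X10
    by (auto simp: slice_def)
  then have "coord k ` nu1 Xs Ys (LMeet (LY i) (aa i j n)) = Ys k \<inter> ssum ?V (Ys j)"
    using coord_image_slice_slice[OF p V add_subgroup_Y[OF perm3_range(2)[OF p]] order.refl] by simp
  then show "coord k ` nu1 Xs Ys (LMeet (LY i) (aa i j n)) = rho (LMeet (LY k) (AA j i (n + 1)))"
    using perm3_third[OF perm3_swap12[OF p]] by (simp add: ssum_commute)
qed (use perm3_range[OF p] valid_AA[OF perm3_swap12[OF p], of "n + 1"] in \<open>simp_all del: AA.simps\<close>)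

lemma psi_AA_fst:
  assumes p: "perm3 i j k"
  shows "psi Xs Ys i (AA i j n) = nu0 Xs Ys (LMeet (LMeet (LY i) (LJoin (LY j) (LY k))) (aa i k n))"
  using nu1_AA[OF p] coord_image_slice[OF p] perm3_range[OF p] valid_aa[OF perm3_swap23[OF p]]
  by (intro psi_eq_nu0I) (auto simp del: AA.simps aa.simps)

lemma psi_Y_AA_snd:
  assumes p: "perm3 i j k"
  shows "psi Xs Ys j (LMeet (LY k) (AA i j n))
    = nu0 Xs Ys (LMeet (LMeet (LY j) (LJoin (LX k) (LY i))) (aa i k n))"
proof (rule psi_eq_nu0I)
  let ?Z = "rho (aa i k n)"
  have valid: "valid_term (aa i k n)" using valid_aa[OF perm3_swap23[OF p]] .
  have "coord j ` nu1 Xs Ys (LMeet (LY k) (AA i j n)) = coord j ` (slice k (Xs k) \<inter> slice i (Ys i \<inter> ?Z))"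
    using nu1_AA[OF p] by simp
  also have "\<dots> = Ys j \<inter> ssum (Xs k) (Ys i \<inter> ?Z)"
    using coord_image_slice_slice[OF perm3_rotate[OF perm3_rotate[OF p]] add_subgroup_X
      X_subset_Y add_subgroup_Y_Int_rho[OF perm3_range(1)[OF p] valid]] perm3_range[OF p]
    by blast
  also have "ssum (Xs k) (Ys i \<inter> ?Z) = ssum (Ys i) (Xs k) \<inter> ?Z"
    using ssum_Int_modular[OF add_subgroup_rho[OF valid] X_subset_rho_aa_snd[OF perm3_swap23[OF p]]]
    by (simp add: ssum_commute)
  finally show "coord j ` nu1 Xs Ys (LMeet (LY k) (AA i j n))
    = rho (LMeet (LMeet (LY j) (LJoin (LX k) (LY i))) (aa i k n))"
    by (simp add: ssum_commute Int_assoc)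
qed (use perm3_range[OF p] valid_aa[OF perm3_swap23[OF p]] in simp_all)

lemma psi_Y_AA_third:
  assumes p: "perm3 i j k"
  shows "psi Xs Ys k (LMeet (LY j) (AA i j n)) = nu0 Xs Ys (LMeet (LY k) (aa j i (n + 1)))"
proof (rule psi_eq_nu0I)
  let ?Z = "rho (aa i k n)"
  have valid: "valid_term (aa i k n)" using valid_aa[OF perm3_swap23[OF p]] .
  have "coord k ` nu1 Xs Ys (LMeet (LY j) (AA i j n)) = coord k ` (slice j (Xs j) \<inter> slice i (Ys i \<inter> ?Z))"
    using nu1_AA[OF p] by simp
  also have "\<dots> = Ys k \<inter> ssum (Xs j) (Ys i \<inter> ?Z)"
    using coord_image_slice_slice[OF perm3_swap12[OF p] add_subgroup_X
      X_subset_Y add_subgroup_Y_Int_rho[OF perm3_range(1)[OF p] valid]] perm3_range[OF p]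
    by blast
  finally show "coord k ` nu1 Xs Ys (LMeet (LY j) (AA i j n)) = rho (LMeet (LY k) (aa j i (n + 1)))"
    using perm3_third[OF perm3_swap12[OF p]] by simp
qed (use perm3_range[OF p] valid_aa[OF perm3_swap12[OF p], of "n + 1"] in \<open>simp_all del: aa.simps\<close>)

end

theorem mainTheorem9:
  fixes scale :: "'k::field \<Rightarrow> 'v::ab_group_add \<Rightarrow> 'v"
    and X0 :: "'v set" and Xs Ys :: "nat \<Rightarrow> 'v set"
    and i j k n :: nat
  assumes rep: "is_rep scale X0 Xs Ys"
    and idx: "{i, j, k} = {1, 2, 3}"
    and n: "n \<ge> 1"
  shows
    "psi Xs Ys i (aa i j n) = nu0 Xs Ys (LMeet (LY i) (AA k j n))
   \<and> (n > 1 \<longrightarrow> psi Xs Ys j (aa i j n) = nu0 Xs Ys (LMeet (LY j) (AA k j n)))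
   \<and> psi Xs Ys j (aa i j 1) = nu0 Xs Ys (LMeet (LMeet (LY j) (LJoin (LY i) (LY k))) (AA k j 1))
   \<and> psi Xs Ys k (LMeet (LY i) (aa i j n)) = nu0 Xs Ys (LMeet (LY k) (AA j i (n + 1)))
   \<and> psi Xs Ys i (AA i j n) = nu0 Xs Ys (LMeet (LMeet (LY i) (LJoin (LY j) (LY k))) (aa i k n))
   \<and> psi Xs Ys j (LMeet (LY k) (AA i j n)) = nu0 Xs Ys (LMeet (LMeet (LY j) (LJoin (LX k) (LY i))) (aa i k n))
   \<and> psi Xs Ys k (LMeet (LY j) (AA i j n)) = nu0 Xs Ys (LMeet (LY k) (aa j i (n + 1)))"
proof -
  interpret subgroup_rep Xs Ys
    using rep by (rule subgroup_rep_if_is_rep)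
  have p: "perm3 i j k" using idx unfolding perm3_def .
  show ?thesis
    using psi_aa_fst[OF p n] psi_aa_snd[OF p] psi_aa_snd_1[OF p] psi_Y_aa_third[OF p]
      psi_AA_fst[OF p] psi_Y_AA_snd[OF p] psi_Y_AA_third[OF p]
    by blast
qed

end
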